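(* Let $q$ be a prime power, $M\geq 2$ an integer, and let $f_1,f_2\in\mathbb{F}_q[x]$ be monic irreducible polynomials (different from $x$) both of degree $n$ and both of exponent $e$. Then for every integer $l\geq 1$, $f_1(x^M)$ has a SRIM factor of degree $2l$ if and only if $f_2(x^M)$ has a SRIM factor of degree $2l$.
   Context: The exponent of a monic irreducible polynomial $f\in\mathbb{F}_q[x]$ with $f(0)\neq0$ is the multiplicative order of any of its roots in its splitting field. For a monic polynomial $f$ of degree $r$ with $f(0)\neq 0$, $f^*(x)=f(0)^{-1}x^rf(x^{-1})$; $f$ is self-reciprocal if $f=f^*$. A SRIM polynomial is a self-reciprocal irreducible monic polynomial. *)

theory Defs
  imports "HOL-Computational_Algebra.Computational_Algebra"
begin

text \<open>Exponent (order) of a polynomial f with f(0) \<noteq> 0: the least positive e with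
  f dividing x^e - 1. For irreducible f this is the multiplicative order of any root.\<close>
definition poly_exponent :: "'a::field poly \<Rightarrow> nat" where
  "poly_exponent f = (LEAST e. 0 < e \<and> f dvd (monom 1 e - 1))"

definition reciprocal_poly :: "'a::field poly \<Rightarrow> 'a poly" where
  "reciprocal_poly f = smult (inverse (coeff f 0)) (reflect_poly f)"

definition self_reciprocal :: "'a::field poly \<Rightarrow> bool" where
  "self_reciprocal f \<longleftrightarrow> lead_coeff f = 1 \<and> coeff f 0 \<noteq> 0 \<and> f = reciprocal_poly f"

definition srim :: "'a::field poly \<Rightarrow> bool" where
  "srim f \<longleftrightarrow> self_reciprocal f \<and> irreducible f \<and> lead_coeff f = 1"

end

(* Let g be a SRIM factor of f1(x^M) and \<beta> a root of g in the algebraic closure, so that \<beta>^M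
   is a root of f1.  A root \<alpha> of f2 has the same multiplicative order e as \<beta>^M, hence
   \<alpha> = (\<beta>^M)^k with k coprime to e.  Lifting k to some a \<equiv> k (mod e) coprime to M e makes
   \<beta>' = \<beta>^a an M-th root of \<alpha>, and \<beta>, \<beta>' are powers of each other; over a finite field this
   forces their minimal polynomials g, g' to have the same degree.  As g is self-reciprocal,
   1/\<beta> is a root of g, so 1/\<beta>' = (1/\<beta>)^a is a root of g', which is therefore self-reciprocal.
   Finally g' divides f2(x^M), and the argument is symmetric in f1 and f2. *)

theory Submission
  imports Defs "HOL-Algebra.Algebraic_Closure_Type"
begin

hide_const (open) Divisibility.irreducible Divisibility.prime up_ring.monom up_ring.coeff
  Module.module.smult Polynomials.degree Polynomials.lead_coeff

definition poly_ac :: "'a::field poly \<Rightarrow> 'a alg_closure \<Rightarrow> 'a alg_closure" where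
  "poly_ac p = poly (map_poly to_ac p)"

lemma map_poly_to_ac_add: "map_poly to_ac (p + q) = map_poly to_ac p + map_poly to_ac q"
  by (rule poly_eqI) (simp add: coeff_map_poly)

lemma map_poly_to_ac_diff: "map_poly to_ac (p - q) = map_poly to_ac p - map_poly to_ac q"
  by (rule poly_eqI) (simp add: coeff_map_poly)

lemma map_poly_to_ac_mult: "map_poly to_ac (p * q) = map_poly to_ac p * map_poly to_ac q"
  by (rule poly_eqI) (simp add: coeff_map_poly coeff_mult to_ac_sum)

lemma map_poly_to_ac_reflect_poly:
  "map_poly to_ac (reflect_poly p) = reflect_poly (map_poly to_ac p)"
  by (rule poly_eqI) (simp add: coeff_map_poly coeff_reflect_poly degree_map_poly)

lemma poly_ac_0 [simp]: "poly_ac 0 x = 0"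
  by (simp add: poly_ac_def)

lemma poly_ac_1 [simp]: "poly_ac 1 x = 1"
  by (simp add: poly_ac_def)

lemma poly_ac_pCons [simp]: "poly_ac (pCons a p) x = to_ac a + x * poly_ac p x"
  by (simp add: poly_ac_def map_poly_pCons)

lemma poly_ac_add [simp]: "poly_ac (p + q) x = poly_ac p x + poly_ac q x"
  by (simp add: poly_ac_def map_poly_to_ac_add)

lemma poly_ac_diff [simp]: "poly_ac (p - q) x = poly_ac p x - poly_ac q x"
  by (simp add: poly_ac_def map_poly_to_ac_diff)

lemma poly_ac_mult [simp]: "poly_ac (p * q) x = poly_ac p x * poly_ac q x"
  by (simp add: poly_ac_def map_poly_to_ac_mult)

lemma poly_ac_smult [simp]: "poly_ac (smult c p) x = to_ac c * poly_ac p x"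
  by (simp add: poly_ac_def map_poly_smult)

lemma poly_ac_monom [simp]: "poly_ac (monom c n) x = to_ac c * x ^ n"
  by (simp add: poly_ac_def map_poly_monom poly_monom)

lemma poly_ac_pcompose [simp]: "poly_ac (p \<circ>\<^sub>p q) x = poly_ac p (poly_ac q x)"
  by (induction p rule: pCons_induct) (simp_all add: pcompose_pCons)

lemma poly_ac_at_0: "poly_ac p 0 = to_ac (coeff p 0)"
  by (simp add: poly_ac_def poly_0_coeff_0 coeff_map_poly)

lemma poly_ac_reflect_poly:
  "x \<noteq> 0 \<Longrightarrow> poly_ac (reflect_poly p) x = x ^ degree p * poly_ac p (inverse x)"
  by (simp add: poly_ac_def map_poly_to_ac_reflect_poly poly_reflect_poly_nz degree_map_poly)

lemma poly_ac_const_nonzero: "degree p = 0 \<Longrightarrow> p \<noteq> 0 \<Longrightarrow> poly_ac p x \<noteq> 0"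
  by (elim degree_eq_zeroE) simp

lemma poly_ac_dvd_root: "p dvd q \<Longrightarrow> poly_ac p x = 0 \<Longrightarrow> poly_ac q x = 0"
  by (elim dvdE) simp

lemma poly_ac_has_root: "0 < degree p \<Longrightarrow> \<exists>x. poly_ac p x = 0"
  using alg_closed_imp_poly_has_root[of "map_poly to_ac p"] by (simp add: poly_ac_def degree_map_poly)

definition minimal_root_poly :: "'a::field alg_closure \<Rightarrow> 'a poly \<Rightarrow> bool" where
  "minimal_root_poly x h \<longleftrightarrow> h \<noteq> 0 \<and> poly_ac h x = 0 \<and>
     (\<forall>q. q \<noteq> 0 \<longrightarrow> poly_ac q x = 0 \<longrightarrow> degree h \<le> degree q)"

lemma minimal_root_poly_exists:
  assumes "p \<noteq> 0" "poly_ac p x = 0"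
  shows "\<exists>h. minimal_root_poly x h \<and> lead_coeff h = 1"
proof -
  obtain h where h: "h \<noteq> 0" "poly_ac h x = 0"
    and min: "\<forall>q. q \<noteq> 0 \<and> poly_ac q x = 0 \<longrightarrow> degree h \<le> degree q"
    using ex_has_least_nat[of "\<lambda>q. q \<noteq> 0 \<and> poly_ac q x = 0" p degree] assms by blast
  define h' where "h' = smult (inverse (lead_coeff h)) h"
  have "minimal_root_poly x h'" "lead_coeff h' = 1"
    using h min by (auto simp: minimal_root_poly_def h'_def)
  then show ?thesis by blast
qed

lemma minimal_root_poly_dvd:
  assumes "minimal_root_poly x h" "poly_ac p x = 0"
  shows "h dvd p"
proof (rule ccontr)
  assume "\<not> h dvd p"
  then have r: "p mod h \<noteq> 0" by (simp add: mod_eq_0_iff_dvd)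
  have "poly_ac (p mod h) x = 0"
    using assms by (simp add: minus_div_mult_eq_mod[symmetric] minimal_root_poly_def)
  then have "degree h \<le> degree (p mod h)" using assms(1) r by (simp add: minimal_root_poly_def)
  moreover have "degree (p mod h) < degree h"
    using r assms(1) degree_mod_less' by (auto simp: minimal_root_poly_def)
  ultimately show False by simp
qed

lemma minimal_root_poly_irreducible:
  assumes "minimal_root_poly x h"
  shows "irreducible h"
proof (rule Factorial_Ring.irreducibleI)
  from assms have h: "h \<noteq> 0" "poly_ac h x = 0"
    and min: "\<And>q. q \<noteq> 0 \<Longrightarrow> poly_ac q x = 0 \<Longrightarrow> degree h \<le> degree q"
    by (auto simp: minimal_root_poly_def)
  show "h \<noteq> 0" by fact
  show "\<not> is_unit h" using h poly_ac_const_nonzero is_unit_iff_degree by blast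
  fix a b assume hab: "h = a * b"
  then have "a \<noteq> 0" "b \<noteq> 0" "degree h = degree a + degree b"
    using h(1) by (auto simp: degree_mult_eq)
  moreover have "poly_ac a x = 0 \<or> poly_ac b x = 0" using h(2) hab by simp
  ultimately show "is_unit a \<or> is_unit b" using min[of a] min[of b] by (auto simp: is_unit_iff_degree)
qed

lemma irreducible_dvd_if_common_root:
  assumes "irreducible f" "poly_ac f x = 0" "poly_ac p x = 0"
  shows "f dvd p"
proof -
  have "f \<noteq> 0" using assms(1) by auto
  then obtain h where h: "minimal_root_poly x h" using minimal_root_poly_exists assms(2) by blast
  then obtain k where f: "f = h * k" using minimal_root_poly_dvd assms(2) by (blast elim: dvdE)
  have "\<not> is_unit h" using minimal_root_poly_irreducible[OF h] irreducible_not_unit by blast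
  then have "is_unit k" using Factorial_Ring.irreducibleD[OF assms(1) f] by blast
  then have "f dvd h" using f by simp
  then show ?thesis using minimal_root_poly_dvd[OF h assms(3)] by (rule dvd_trans)
qed

lemma exists_irreducible_factor_with_root:
  assumes "p \<noteq> 0" "poly_ac p x = 0"
  shows "\<exists>h. irreducible h \<and> lead_coeff h = 1 \<and> h dvd p \<and> poly_ac h x = 0"
  using minimal_root_poly_exists[OF assms] minimal_root_poly_irreducible
    minimal_root_poly_dvd[OF _ assms(2)] by (auto simp: minimal_root_poly_def)

lemma degree_pos_if_irreducible: "irreducible (f :: 'a::field poly) \<Longrightarrow> 0 < degree f"
  using irreducible_not_unit[of f] is_unit_iff_degree[of f] by (auto simp: Factorial_Ring.irreducible_def)

lemma coeff_0_nonzero_if_irreducible: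
  fixes f :: "'a::field poly"
  assumes "irreducible f" "lead_coeff f = 1" "f \<noteq> [:0, 1:]"
  shows "coeff f 0 \<noteq> 0"
proof
  assume "coeff f 0 = 0"
  then have "[:0, 1:] dvd f" by (simp add: dvd_iff_poly_eq_0 poly_0_coeff_0)
  then obtain k where f: "f = [:0, 1:] * k" by (elim dvdE)
  have "\<not> is_unit [:0, 1 :: 'a:]" by (simp add: is_unit_iff_degree)
  then have "is_unit k" using Factorial_Ring.irreducibleD[OF assms(1) f] by blast
  then obtain c where "k = [:c:]" by (auto simp: is_unit_poly_iff)
  then show False using assms(2,3) f by (cases "c = 0") auto
qed

lemma eq_reciprocal_poly_if_dvd_reflect_poly:
  fixes f :: "'a::field poly"
  assumes "lead_coeff f = 1" "coeff f 0 \<noteq> 0" "f dvd reflect_poly f"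
  shows "f = reciprocal_poly f"
proof -
  obtain k where k: "reflect_poly f = f * k" using assms(3) by (elim dvdE)
  have "f \<noteq> 0" "reflect_poly f \<noteq> 0" using assms(1) by auto
  then have "degree f + degree k = degree f"
    using k assms(2) by (metis degree_mult_eq degree_reflect_poly_eq mult_zero_right)
  then have "degree k = 0" by simp
  then obtain c where c: "k = [:c:]" by (elim degree_eq_zeroE)
  have "lead_coeff (reflect_poly f) = coeff f 0" using assms(2) by (simp add: coeff_reflect_poly)
  moreover have "lead_coeff (f * k) = c" using assms(1) c by (simp add: lead_coeff_mult)
  ultimately have "coeff f 0 = c" using k by simp
  then show ?thesis using k c assms(2) by (simp add: reciprocal_poly_def)
qed

lemma self_reciprocal_root_inverse:
  assumes "self_reciprocal f" "poly_ac f x = 0"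
  shows "poly_ac f (inverse x) = 0"
proof -
  have c: "coeff f 0 \<noteq> 0" "f = reciprocal_poly f" using assms(1) by (auto simp: self_reciprocal_def)
  then have "x \<noteq> 0" using assms(2) by (auto simp: poly_ac_at_0)
  have "poly_ac f (inverse x) = to_ac (inverse (coeff f 0)) * poly_ac (reflect_poly f) (inverse x)"
    using arg_cong[OF c(2), of "\<lambda>p. poly_ac p (inverse x)"] by (simp add: reciprocal_poly_def)
  also have "\<dots> = 0" using \<open>x \<noteq> 0\<close> assms(2) by (simp add: poly_ac_reflect_poly)
  finally show ?thesis .
qed

lemma self_reciprocal_if_root_inverse:
  assumes "irreducible h" "lead_coeff h = 1" "x \<noteq> 0"
    and "poly_ac h x = 0" "poly_ac h (inverse x) = 0"
  shows "self_reciprocal h"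
proof -
  have "coeff h 0 \<noteq> 0"
  proof
    assume "coeff h 0 = 0"
    then have "h dvd [:0, 1:]"
      using irreducible_dvd_if_common_root[OF assms(1), of 0] by (simp add: poly_ac_at_0)
    then show False using poly_ac_dvd_root[of h "[:0, 1:]" x] assms(3,4) by simp
  qed
  moreover have "h dvd reflect_poly h"
    using irreducible_dvd_if_common_root[OF assms(1,4)] assms(3,5) by (simp add: poly_ac_reflect_poly)
  ultimately show ?thesis
    using eq_reciprocal_poly_if_dvd_reflect_poly assms(2) by (simp add: self_reciprocal_def)
qed

lemma bij_betw_Poly_degree_le:
  "bij_betw Poly {xs :: 'a::zero list. length xs = Suc d} {p. degree p \<le> d}"
proof (rule bij_betw_imageI)
  show "inj_on Poly {xs :: 'a list. length xs = Suc d}"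
  proof (rule inj_onI)
    fix xs ys :: "'a list"
    assume len: "xs \<in> {xs. length xs = Suc d}" "ys \<in> {xs. length xs = Suc d}"
      and eq: "Poly xs = Poly ys"
    show "xs = ys"
    proof (rule nth_equalityI)
      show "length xs = length ys" using len by simp
      fix i assume "i < length xs"
      then show "xs ! i = ys ! i"
        using arg_cong[OF eq, of "\<lambda>p. coeff p i"] len by (simp add: nth_default_nth)
    qed
  qed
  show "Poly ` {xs. length xs = Suc d} = {p :: 'a poly. degree p \<le> d}"
  proof (intro equalityI subsetI)
    fix p :: "'a poly" assume "p \<in> Poly ` {xs. length xs = Suc d}"
    then obtain xs where "p = Poly xs" "length xs = Suc d" by blast
    then have "coeff p i = 0" if "d < i" for i using that by (simp add: nth_default_beyond)
    then show "p \<in> {p. degree p \<le> d}" by (simp add: degree_le)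
  next
    fix p :: "'a poly" assume "p \<in> {p. degree p \<le> d}"
    define xs where "xs = coeffs p @ replicate (Suc d - length (coeffs p)) 0"
    have "length (coeffs p) \<le> Suc d"
      using \<open>p \<in> {p. degree p \<le> d}\<close> by (cases "p = 0") (simp_all add: length_coeffs_degree)
    then have "length xs = Suc d" by (simp add: xs_def)
    moreover have "p = Poly xs" by (simp add: xs_def)
    ultimately show "p \<in> Poly ` {xs. length xs = Suc d}" by blast
  qed
qed

lemma finite_degree_le: "finite {p :: 'a::{zero,finite} poly. degree p \<le> d}"
proof -
  have "finite {xs :: 'a list. length xs = Suc d}"
    using finite_lists_length_eq[of "UNIV :: 'a set" "Suc d"] by simp
  then show ?thesis using bij_betw_finite[OF bij_betw_Poly_degree_le] by blast
qed

lemma card_degree_le: "card {p :: 'a::{zero,finite} poly. degree p \<le> d} = card (UNIV :: 'a set) ^ Suc d"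
proof -
  have "card {xs :: 'a list. length xs = Suc d} = card (UNIV :: 'a set) ^ Suc d"
    using card_lists_length_eq[of "UNIV :: 'a set" "Suc d"] by simp
  then show ?thesis using bij_betw_same_card[OF bij_betw_Poly_degree_le] by metis
qed

lemma finite_powers_if_root:
  fixes p :: "'a::{field,finite} poly"
  assumes "p \<noteq> 0" "poly_ac p x = 0"
  shows "finite (range ((^) x))"
proof -
  have "x ^ i = poly_ac (monom 1 i mod p) x" for i
    using assms(2) by (simp add: minus_div_mult_eq_mod[symmetric])
  moreover have "degree (q mod p) \<le> degree p" for q
    using degree_mod_less[OF assms(1), of q] by auto
  ultimately have "range ((^) x) \<subseteq> (\<lambda>q. poly_ac q x) ` {q. degree q \<le> degree p}"
    by blast
  then show ?thesis using finite_degree_le finite_surj by blast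
qed

lemma power_eq_1_if_finite_powers:
  fixes x :: "'b::idom"
  assumes "x \<noteq> 0" "finite (range ((^) x))"
  shows "\<exists>m>0. x ^ m = 1"
proof -
  have "\<not> inj ((^) x)" using assms(2) finite_imageD infinite_UNIV_nat by blast
  then obtain i j where "i \<noteq> j" "x ^ i = x ^ j" unfolding inj_def by blast
  then have ij: "min i j < max i j" "x ^ min i j * x ^ (max i j - min i j) = x ^ min i j * 1"
    by (auto simp: min_def max_def power_add[symmetric])
  then show ?thesis using assms(1) by (intro exI[of _ "max i j - min i j"]) auto
qed

lemma degree_le_if_root_power:
  fixes G F :: "'a::{field,finite} poly"
  assumes G: "irreducible G" "poly_ac G x = 0" and F: "irreducible F" "poly_ac F (x ^ k) = 0"
  shows "degree F \<le> degree G"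
proof -
  define d where "d = degree G"
  have "0 < d" using degree_pos_if_irreducible[OF G(1)] by (simp add: d_def)
  define \<phi> where "\<phi> h = (h \<circ>\<^sub>p monom 1 k) mod G" for h
  have "degree (\<phi> h) \<le> d - 1" for h
    using degree_mod_less[of G "h \<circ>\<^sub>p monom 1 k"] \<open>0 < d\<close>
    by (cases "G = 0") (auto simp: \<phi>_def d_def)
  then have image: "\<phi> ` {h. degree h \<le> d} \<subseteq> {h. degree h \<le> d - 1}" by auto
  have "card {h :: 'a poly. degree h \<le> d - 1} < card {h :: 'a poly. degree h \<le> d}"
  proof -
    have "2 \<le> card (UNIV :: 'a set)" using card_mono[of UNIV "{0 :: 'a, 1}"] by simp
    then show ?thesis using \<open>0 < d\<close> by (simp add: card_degree_le)
  qed
  then have "\<not> inj_on \<phi> {h. degree h \<le> d}"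
    using card_inj_on_le[OF _ image finite_degree_le] by linarith
  then obtain h1 h2 where h: "degree h1 \<le> d" "degree h2 \<le> d" "h1 \<noteq> h2" "\<phi> h1 = \<phi> h2"
    unfolding inj_on_def by blast
  then have "G dvd (h1 - h2) \<circ>\<^sub>p monom 1 k" by (simp add: \<phi>_def mod_eq_dvd_iff pcompose_diff)
  then have "poly_ac (h1 - h2) (x ^ k) = 0" using poly_ac_dvd_root G(2) by fastforce
  then have "F dvd h1 - h2" using irreducible_dvd_if_common_root F by blast
  then have "degree F \<le> degree (h1 - h2)" using h(3) by (metis dvd_imp_degree_le eq_iff_diff_eq_0)
  also have "\<dots> \<le> d" using h(1,2) degree_diff_le by blast
  finally show ?thesis by (simp add: d_def)
qed

definition has_mult_order :: "'b::monoid_mult \<Rightarrow> nat \<Rightarrow> bool" where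
  "has_mult_order x e \<longleftrightarrow>
     0 < e \<and> x ^ e = 1 \<and> (\<forall>m. 0 < m \<longrightarrow> m < e \<longrightarrow> x ^ m \<noteq> 1)"

lemma has_mult_order_poly_exponent:
  fixes f :: "'a::{field,finite} poly"
  assumes "irreducible f" "coeff f 0 \<noteq> 0" "poly_ac f x = 0"
  shows "has_mult_order x (poly_exponent f)"
proof -
  have "poly_exponent f = (LEAST e. 0 < e \<and> x ^ e = 1)"
  proof -
    have "f dvd monom 1 e - 1 \<longleftrightarrow> x ^ e = 1" for e
      using irreducible_dvd_if_common_root[OF assms(1,3), of "monom 1 e - 1"]
        poly_ac_dvd_root[OF _ assms(3), of "monom 1 e - 1"] by auto
    then show ?thesis by (simp add: poly_exponent_def)
  qed
  moreover obtain m where "0 < m" "x ^ m = 1"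
  proof -
    have "x \<noteq> 0" using assms(2,3) by (auto simp: poly_ac_at_0)
    moreover have "f \<noteq> 0" using assms(2) by auto
    ultimately show ?thesis using that power_eq_1_if_finite_powers finite_powers_if_root assms(3) by blast
  qed
  ultimately show ?thesis
    unfolding has_mult_order_def using LeastI[of "\<lambda>e. 0 < e \<and> x ^ e = 1" m]
      not_less_Least[of _ "\<lambda>e. 0 < e \<and> x ^ e = 1"] by auto
qed

lemma power_of_has_mult_order:
  fixes x y :: "'b::idom"
  assumes "has_mult_order x e" "y ^ e = 1"
  shows "\<exists>k. y = x ^ k"
proof -
  from assms(1) have e: "0 < e" "x ^ e = 1"
    and min: "\<And>m. 0 < m \<Longrightarrow> m < e \<Longrightarrow> x ^ m \<noteq> 1"
    by (auto simp: has_mult_order_def)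
  then have "x \<noteq> 0" by (metis zero_power zero_neq_one)
  define R where "R = {z :: 'b. z ^ e = 1}"
  define P :: "'b poly" where "P = monom 1 e - 1"
  have "coeff P e = 1" using e(1) by (simp add: P_def)
  then have "P \<noteq> 0" by (metis coeff_0 zero_neq_one)
  have "degree P \<le> e" unfolding P_def by (intro degree_diff_le) (simp_all add: degree_monom_le)
  have roots: "{z. poly P z = 0} = R" by (simp add: P_def R_def poly_monom)
  have R: "finite R" "card R \<le> e"
    using poly_roots_finite[OF \<open>P \<noteq> 0\<close>] card_poly_roots_bound[OF \<open>P \<noteq> 0\<close>]
      \<open>degree P \<le> e\<close> by (simp_all add: roots)
  have "inj_on ((^) x) {..<e}"
  proof (rule linorder_inj_onI)
    fix i j assume "i < j" "j \<in> {..<e}"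
    then have "x ^ i * x ^ (j - i) \<noteq> x ^ i * 1" using min[of "j - i"] \<open>x \<noteq> 0\<close> by auto
    then show "x ^ i \<noteq> x ^ j" using \<open>i < j\<close> by (simp add: power_add[symmetric])
  qed auto
  then have card: "card ((^) x ` {..<e}) = e" by (simp add: card_image)
  have "(x ^ i) ^ e = 1" for i using e(2) by (metis mult.commute power_mult power_one)
  then have sub: "(^) x ` {..<e} \<subseteq> R" by (auto simp: R_def)
  then have "(^) x ` {..<e} = R"
    using card_subset_eq[OF R(1) sub] card_mono[OF R(1) sub] card R(2) by linarith
  moreover have "y \<in> R" using assms(2) by (simp add: R_def)
  ultimately show ?thesis by blast
qed

lemma coprime_if_has_mult_order_power:
  fixes x :: "'b::monoid_mult"
  assumes "x ^ e = 1" "has_mult_order (x ^ k) e"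
  shows "coprime k e"
proof (rule ccontr)
  assume "\<not> coprime k e"
  define d where "d = gcd k e"
  have "0 < e" using assms(2) by (simp add: has_mult_order_def)
  then have "1 < d" using \<open>\<not> coprime k e\<close> by (simp add: d_def coprime_iff_gcd_eq_1 nat_neq_iff)
  obtain k' e' where k': "k = d * k'" and e': "e = d * e'" unfolding d_def
    by (meson dvdE gcd_dvd1 gcd_dvd2)
  have "0 < e'" "e' < e" using \<open>0 < e\<close> \<open>1 < d\<close> e' by auto
  moreover have "k * e' = e * k'" using k' e' by simp
  then have "(x ^ k) ^ e' = (x ^ e) ^ k'" by (simp only: power_mult[symmetric])
  ultimately show False using assms unfolding has_mult_order_def by simp
qed

lemma exists_coprime_mod_eq:
  fixes k e T :: nat
  assumes "coprime k e" "0 < T"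
  shows "\<exists>k'. k' mod e = k mod e \<and> coprime k' T"
proof -
  define m where "m = \<Prod>{p \<in> prime_factors T. \<not> p dvd k}"
  define k' where "k' = k + e * m"
  \<comment> \<open>every prime factor of T divides exactly one of k and e * m\<close>
  have no_common: "\<not> p dvd k'" if p: "prime p" "p dvd T" for p
  proof (cases "p dvd k")
    case True
    then have "\<not> p dvd e" using assms(1) p(1) by (meson coprime_common_divisor not_prime_unit)
    moreover have "\<not> p dvd m"
    proof
      assume "p dvd m"
      then obtain q where "q \<in> prime_factors T" "\<not> q dvd k" "p dvd q"
        using p(1) by (auto simp: m_def prime_dvd_prod_iff)
      then show False using p(1) True by (metis in_prime_factors_imp_prime primes_dvd_imp_eq)
    qed
    ultimately have "\<not> p dvd e * m" using p(1) prime_dvd_mult_iff by blast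
    then show ?thesis using True by (simp add: k'_def dvd_add_right_iff)
  next
    case False
    then have "p dvd m" using p assms(2) by (auto simp: m_def in_prime_factors_iff intro: dvd_prodI)
    then show ?thesis using False by (simp add: k'_def dvd_add_left_iff)
  qed
  have "coprime k' T"
  proof (rule ccontr)
    assume "\<not> coprime k' T"
    then obtain p where "prime p" "p dvd gcd k' T"
      using prime_factor_nat[of "gcd k' T"] by (auto simp: coprime_iff_gcd_eq_1)
    then show False using no_common by auto
  qed
  moreover have "k' mod e = k mod e" by (simp add: k'_def)
  ultimately show ?thesis by blast
qed

lemma exists_inverse_mod:
  fixes a T :: nat
  assumes "coprime a T"
  shows "\<exists>b. a * b mod T = 1 mod T"
proof (cases "a = 0")
  case True
  then show ?thesis using assms by simp
next
  case False
  then obtain x y where "a * x = T * y + 1" using bezout_nat[of a T] assms by auto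
  then have "a * x mod T = 1 mod T" by (metis add.commute mod_mult_self2 mult.commute)
  then show ?thesis by blast
qed

lemma power_eq_if_mod_eq:
  fixes x :: "'b::monoid_mult"
  assumes "x ^ T = 1" "a mod T = b mod T"
  shows "x ^ a = x ^ b"
proof -
  have "x ^ n = x ^ (n mod T)" for n
  proof -
    have "x ^ n = (x ^ T) ^ (n div T) * x ^ (n mod T)"
      by (metis mult_div_mod_eq power_add power_mult)
    then show ?thesis using assms(1) by simp
  qed
  then show ?thesis using assms(2) by metis
qed

lemma exists_mutual_power_root:
  fixes \<beta> \<alpha> :: "'b::idom"
  assumes "has_mult_order (\<beta> ^ M) e" "has_mult_order \<alpha> e" "0 < M"
  shows "\<exists>a b. (\<beta> ^ a) ^ M = \<alpha> \<and> (\<beta> ^ a) ^ b = \<beta>"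
proof -
  have e: "0 < e" "(\<beta> ^ M) ^ e = 1" using assms(1) by (auto simp: has_mult_order_def)
  have "\<alpha> ^ e = 1" using assms(2) by (simp add: has_mult_order_def)
  then obtain k where k: "\<alpha> = (\<beta> ^ M) ^ k" using power_of_has_mult_order[OF assms(1)] by blast
  have "coprime k e" using coprime_if_has_mult_order_power e(2) assms(2) k by blast
  then obtain a where a: "a mod e = k mod e" "coprime a (M * e)"
    using exists_coprime_mod_eq e(1) assms(3) by (metis nat_0_less_mult_iff)
  obtain b where b: "a * b mod (M * e) = 1 mod (M * e)" using exists_inverse_mod a(2) by blast
  have \<beta>: "\<beta> ^ (M * e) = 1" using e(2) by (simp add: power_mult)
  have "(\<beta> ^ a) ^ M = (\<beta> ^ M) ^ a" by (simp flip: power_mult add: mult.commute)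
  also have "\<dots> = \<alpha>" using power_eq_if_mod_eq[OF e(2) a(1)] k by simp
  finally have "(\<beta> ^ a) ^ M = \<alpha>" .
  moreover have "(\<beta> ^ a) ^ b = \<beta>" using power_eq_if_mod_eq[OF \<beta> b] by (simp add: power_mult)
  ultimately show ?thesis by blast
qed

lemma srim_factor_transfer:
  fixes f1 f2 g :: "'a::{field,finite} poly"
  assumes "0 < M"
    and f1: "irreducible f1" "coeff f1 0 \<noteq> 0" and f2: "irreducible f2" "coeff f2 0 \<noteq> 0"
    and exponent: "poly_exponent f1 = poly_exponent f2"
    and g: "srim g" "g dvd f1 \<circ>\<^sub>p monom 1 M"
  shows "\<exists>g'. srim g' \<and> degree g' = degree g \<and> g' dvd f2 \<circ>\<^sub>p monom 1 M"
proof -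
  have g_irr: "irreducible g" and g_rec: "self_reciprocal g" using g(1) by (auto simp: srim_def)
  obtain \<beta> where \<beta>: "poly_ac g \<beta> = 0"
    using poly_ac_has_root degree_pos_if_irreducible[OF g_irr] by blast
  then have "poly_ac f1 (\<beta> ^ M) = 0" using poly_ac_dvd_root[OF g(2)] by simp
  then have ord1: "has_mult_order (\<beta> ^ M) (poly_exponent f2)"
    using has_mult_order_poly_exponent f1 exponent by metis
  obtain \<alpha> where \<alpha>: "poly_ac f2 \<alpha> = 0"
    using poly_ac_has_root degree_pos_if_irreducible[OF f2(1)] by blast
  then have ord2: "has_mult_order \<alpha> (poly_exponent f2)" using has_mult_order_poly_exponent f2 by blast
  obtain a b where ab: "(\<beta> ^ a) ^ M = \<alpha>" "(\<beta> ^ a) ^ b = \<beta>"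
    using exists_mutual_power_root[OF ord1 ord2 \<open>0 < M\<close>] by blast
  define \<beta>' where "\<beta>' = \<beta> ^ a"
  have "0 < degree (f2 \<circ>\<^sub>p monom 1 M)"
    using degree_pos_if_irreducible[OF f2(1)] \<open>0 < M\<close> by (simp add: degree_pcompose degree_monom_eq)
  then have "f2 \<circ>\<^sub>p monom 1 M \<noteq> 0" by auto
  moreover have "poly_ac (f2 \<circ>\<^sub>p monom 1 M) \<beta>' = 0" using \<alpha> ab(1) by (simp add: \<beta>'_def)
  ultimately obtain g' where g': "irreducible g'" "lead_coeff g' = 1"
    "g' dvd f2 \<circ>\<^sub>p monom 1 M" "poly_ac g' \<beta>' = 0"
    using exists_irreducible_factor_with_root by blast
  have "degree g' \<le> degree g"
    using degree_le_if_root_power[OF g_irr \<beta> g'(1)] g'(4) by (simp add: \<beta>'_def)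
  moreover have "degree g \<le> degree g'"
    using degree_le_if_root_power[OF g'(1,4) g_irr, of b] \<beta> ab(2) by (simp add: \<beta>'_def)
  ultimately have "degree g' = degree g" by simp
  moreover have "self_reciprocal g'"
  proof (rule self_reciprocal_if_root_inverse[OF g'(1,2) _ g'(4)])
    have "\<beta> \<noteq> 0" using \<beta> g_rec by (auto simp: self_reciprocal_def poly_ac_at_0)
    then show "\<beta>' \<noteq> 0" by (simp add: \<beta>'_def)
    have "g dvd g' \<circ>\<^sub>p monom 1 a"
      using irreducible_dvd_if_common_root[OF g_irr \<beta>] g'(4) by (simp add: \<beta>'_def)
    then show "poly_ac g' (inverse \<beta>') = 0"
      using poly_ac_dvd_root self_reciprocal_root_inverse[OF g_rec \<beta>]
      by (fastforce simp: \<beta>'_def power_inverse)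
  qed
  ultimately show ?thesis using g' by (auto simp: srim_def)
qed

theorem lemma4p17:
  fixes f1 f2 :: "'a::{field,finite} poly" and M n e l :: nat
  assumes "M \<ge> 2"
    and "lead_coeff f1 = 1" and "irreducible f1" and "f1 \<noteq> [:0, 1:]"
    and "lead_coeff f2 = 1" and "irreducible f2" and "f2 \<noteq> [:0, 1:]"
    and "degree f1 = n" and "degree f2 = n"
    and "poly_exponent f1 = e" and "poly_exponent f2 = e"
    and "l \<ge> 1"
  shows "(\<exists>g. srim g \<and> degree g = 2 * l \<and> g dvd pcompose f1 (monom 1 M)) \<longleftrightarrow>
         (\<exists>g. srim g \<and> degree g = 2 * l \<and> g dvd pcompose f2 (monom 1 M))"
proof -
  \<comment> \<open>only \<open>0 < M\<close> is used\<close>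
  have "0 < M" using assms(1) by simp
  have c1: "coeff f1 0 \<noteq> 0" using coeff_0_nonzero_if_irreducible assms(2-4) by blast
  have c2: "coeff f2 0 \<noteq> 0" using coeff_0_nonzero_if_irreducible assms(5-7) by blast
  have "poly_exponent f1 = poly_exponent f2" using assms(10,11) by simp
  then show ?thesis
    using srim_factor_transfer[OF \<open>0 < M\<close> assms(3) c1 assms(6) c2]
      srim_factor_transfer[OF \<open>0 < M\<close> assms(6) c2 assms(3) c1]
    by metis
qed

end
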